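(* Let $n\ge2$. For $0\le p,q\le n$ let $d^n_{p,q}$ be the number of tuples $(i_1,\dots,i_p,j_1,\dots,j_q)$ with $1\le i_1<\dots<i_p\le n$, $1\le j_1<\dots<j_q\le n$ and $\sum_{r=1}^p i_r=\sum_{s=1}^q j_s$ (empty sums equal $0$; thus $d^n_{0,0}=1$, $d^n_{1,0}=d^n_{0,1}=0$), and for $0\le k\le 2n$ let $D^n_k=\sum_{p+q=k}d^n_{p,q}$. Then: (i) $d^n_{1,1}=d^n_{n-1,n-1}=n$ and $d^n_{k,k}\equiv\binom nk\pmod 2$; (ii) if $n$ is even then $d^n_{1,2}=\frac{n(n-2)}4$, and if $n$ is odd then $d^n_{1,2}=\left(\frac{n-1}2\right)^2$; (iii) $D^n_k=D^n_{2n-k}$ for $k=0,\dots,n$, and $D^n_0=1$, $D^n_1=0$, $D^n_2=n$; (iv) if $k$ is odd then $D^n_k$ is even; (v) $D^n_{2k}\equiv\binom nk\pmod 2$. *)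

theory Defs
  imports Complex_Main "HOL-Number_Theory.Cong"
begin

text \<open>Strictly increasing tuples (i_1<...<i_p) with entries in {1..n} are identified
  with subsets I of {1..n} of cardinality p; the tuple sum is the sum of the set.\<close>

definition dpq :: "nat \<Rightarrow> nat \<Rightarrow> nat \<Rightarrow> nat" where
  "dpq n p q = card {(I, J). I \<subseteq> {1..n} \<and> J \<subseteq> {1..n} \<and> card I = p \<and> card J = q
                              \<and> \<Sum>I = \<Sum>J}"

definition Dk :: "nat \<Rightarrow> nat \<Rightarrow> nat" where
  "Dk n k = (\<Sum>p\<le>n. \<Sum>q\<le>n. if p + q = k then dpq n p q else 0)"

end

theory Submission
  imports Defs "HOL-Library.Z2" "HOL-Library.Disjoint_Sets"
begin

text \<open>Both \<open>d\<^sup>n\<^sub>p\<^sub>,\<^sub>q\<close> and \<open>D\<^sup>n\<^sub>k\<close> count pairs \<open>(I, J)\<close> of subsets of \<open>{1..n}\<close> with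
  equal sums, subject to a condition on \<open>(card I, card J)\<close>. Swapping \<open>I\<close> and \<open>J\<close> is an
  involution whose fixed points are the pairs \<open>(I, I)\<close>, so modulo 2 only the subsets of the
  prescribed size survive; this gives all parity statements. Complementing both sets in
  \<open>{1..n}\<close> preserves the equality of sums and sends the cardinalities \<open>(p, q)\<close> to
  \<open>(n - p, n - q)\<close>, which gives the symmetries. Since a nonempty subset of \<open>{1..n}\<close> has
  positive sum, in small degrees only the pairs \<open>({i}, {i})\<close> and \<open>({a + b}, {a, b})\<close> with
  \<open>a < b\<close> occur.\<close>

lemma even_card_if_fixpoint_free_involution:
  assumes "\<And>x. x \<in> X \<Longrightarrow> h x \<in> X" "\<And>x. x \<in> X \<Longrightarrow> h (h x) = x"
    and "\<And>x. x \<in> X \<Longrightarrow> h x \<noteq> x"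
  shows "even (card X)"
proof -
  \<comment> \<open>In characteristic 2 each orbit \<open>{x, h x}\<close> contributes \<open>1 + 1 = 0\<close>.\<close>
  have "(\<Sum>x\<in>X. 1 :: bit) = 0"
    by (rule sum_involution_eq_0[where h = h]) (use assms in simp_all)
  then show ?thesis
    using even_of_nat_iff[of "card X", where ?'a = bit] by simp
qed

lemma card_mod_2_eq_card_fixpoints_mod_2:
  assumes "finite X" "\<And>x. x \<in> X \<Longrightarrow> h x \<in> X" "\<And>x. x \<in> X \<Longrightarrow> h (h x) = x"
  shows "card X mod 2 = card {x \<in> X. h x = x} mod 2"
proof -
  let ?F = "{x \<in> X. h x = x}"
  have "even (card (X - ?F))"
    by (rule even_card_if_fixpoint_free_involution[where h = h]) (use assms in auto)
  moreover have "card X = card ?F + card (X - ?F)"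
    using assms(1) card_Diff_subset[of ?F X] card_mono[of X ?F] by fastforce
  ultimately show ?thesis by presburger
qed

definition equal_sum_pairs :: "nat \<Rightarrow> (nat \<Rightarrow> nat \<Rightarrow> bool) \<Rightarrow> (nat set \<times> nat set) set" where
  "equal_sum_pairs n P =
     {(I, J). I \<subseteq> {1..n} \<and> J \<subseteq> {1..n} \<and> P (card I) (card J) \<and> \<Sum>I = \<Sum>J}"

lemma finite_equal_sum_pairs: "finite (equal_sum_pairs n P)"
  by (rule finite_subset[of _ "Pow {1..n} \<times> Pow {1..n}"]) (auto simp: equal_sum_pairs_def)

lemma equal_sum_pairs_cong:
  assumes "\<And>a b. a \<le> n \<Longrightarrow> b \<le> n \<Longrightarrow> P a b \<longleftrightarrow> Q a b"
  shows "equal_sum_pairs n P = equal_sum_pairs n Q"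
proof -
  have "card I \<le> n" if "I \<subseteq> {1..n}" for I
    using card_mono[OF _ that] by simp
  then show ?thesis
    using assms unfolding equal_sum_pairs_def by blast
qed

lemma card_eq_0_iff_card_eq_0_if_in_equal_sum_pairs:
  assumes "(I, J) \<in> equal_sum_pairs n P"
  shows "card I = 0 \<longleftrightarrow> card J = 0"
proof -
  have sum_eq_0: "\<Sum>K = 0 \<longleftrightarrow> card K = 0" if "K \<subseteq> {1..n}" for K :: "nat set"
    using that finite_subset[OF that] by (auto simp: sum_eq_0_iff)
  have "I \<subseteq> {1..n}" "J \<subseteq> {1..n}" "\<Sum>I = \<Sum>J"
    using assms by (auto simp: equal_sum_pairs_def)
  then show ?thesis
    using sum_eq_0 by metis
qed

lemma dpq_eq_card_equal_sum_pairs: "dpq n p q = card (equal_sum_pairs n (\<lambda>a b. a = p \<and> b = q))"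
  unfolding dpq_def equal_sum_pairs_def by simp

lemma card_equal_sum_pairs_eq_sum_dpq:
  "card (equal_sum_pairs n P) = (\<Sum>p\<le>n. \<Sum>q\<le>n. if P p q then dpq n p q else 0)"
proof -
  let ?E = "equal_sum_pairs n P"
  let ?cards = "\<lambda>(I, J). (card I, card J)"
  have fiber: "{x \<in> ?E. ?cards x = (p, q)} =
      (if P p q then equal_sum_pairs n (\<lambda>a b. a = p \<and> b = q) else {})" for p q
    by (auto simp: equal_sum_pairs_def)
  have "?cards ` ?E \<subseteq> {..n} \<times> {..n}"
    by (auto simp: equal_sum_pairs_def intro!: card_mono[of "{1..n}", simplified])
  then have "card ?E = (\<Sum>y\<in>{..n} \<times> {..n}. card {x \<in> ?E. ?cards x = y})"
    using sum.group[of ?E "{..n} \<times> {..n}" ?cards "\<lambda>_. 1::nat"]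
    by (simp add: finite_equal_sum_pairs)
  also have "\<dots> = (\<Sum>p\<le>n. \<Sum>q\<le>n. card {x \<in> ?E. ?cards x = (p, q)})"
    by (simp add: sum.cartesian_product)
  also have "\<dots> = (\<Sum>p\<le>n. \<Sum>q\<le>n. if P p q then dpq n p q else 0)"
    by (intro sum.cong) (simp_all add: fiber dpq_eq_card_equal_sum_pairs)
  finally show ?thesis .
qed

lemma Dk_eq_card_equal_sum_pairs: "Dk n k = card (equal_sum_pairs n (\<lambda>a b. a + b = k))"
  unfolding Dk_def card_equal_sum_pairs_eq_sum_dpq ..

lemma compl_in_equal_sum_pairs:
  assumes "(I, J) \<in> equal_sum_pairs n P"
  shows "({1..n} - I, {1..n} - J) \<in> equal_sum_pairs n (\<lambda>a b. P (n - a) (n - b))"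
proof -
  have card_compl: "card ({1..n} - K) = n - card K" if "K \<subseteq> {1..n}" for K :: "nat set"
    using that by (simp add: card_Diff_subset finite_subset)
  have sum_compl: "\<Sum>({1..n} - K) = \<Sum>{1..n} - \<Sum>K" if "K \<subseteq> {1..n}" for K :: "nat set"
    using that by (simp add: sum_diff_nat finite_subset)
  have IJ: "I \<subseteq> {1..n}" "J \<subseteq> {1..n}" "P (card I) (card J)" "\<Sum>I = \<Sum>J"
    using assms by (auto simp: equal_sum_pairs_def)
  moreover have "card I \<le> n" "card J \<le> n"
    using IJ card_mono[of "{1..n}"] by auto
  ultimately show ?thesis
    unfolding equal_sum_pairs_def
    using card_compl[OF IJ(1)] card_compl[OF IJ(2)] sum_compl[OF IJ(1)] sum_compl[OF IJ(2)]
    by auto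
qed

lemma card_equal_sum_pairs_compl:
  "card (equal_sum_pairs n (\<lambda>a b. P (n - a) (n - b))) = card (equal_sum_pairs n P)"
proof -
  let ?compl = "\<lambda>(I, J). ({1..n} - I, {1..n} - J)"
  have double_compl: "equal_sum_pairs n (\<lambda>a b. P (n - (n - a)) (n - (n - b))) =
      equal_sum_pairs n P"
    by (rule equal_sum_pairs_cong) simp
  have "?compl x \<in> equal_sum_pairs n P"
    if "x \<in> equal_sum_pairs n (\<lambda>a b. P (n - a) (n - b))" for x
    using that compl_in_equal_sum_pairs[of "fst x" "snd x" n "\<lambda>a b. P (n - a) (n - b)"]
    unfolding double_compl by (simp add: split_def)
  moreover have "?compl x \<in> equal_sum_pairs n (\<lambda>a b. P (n - a) (n - b))"
    if "x \<in> equal_sum_pairs n P" for x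
    using that compl_in_equal_sum_pairs[of "fst x" "snd x" n P] by (simp add: split_def)
  moreover have "?compl (?compl x) = x" if "x \<in> equal_sum_pairs n Q" for x Q
    using that by (auto simp: equal_sum_pairs_def)
  ultimately have "bij_betw ?compl (equal_sum_pairs n (\<lambda>a b. P (n - a) (n - b)))
      (equal_sum_pairs n P)"
    by (intro bij_betw_byWitness[where f' = ?compl]) auto
  then show ?thesis
    by (rule bij_betw_same_card)
qed

lemma card_equal_sum_pairs_mod_2:
  assumes "\<And>a b. P a b \<longleftrightarrow> P b a"
  shows "card (equal_sum_pairs n P) mod 2 = card {I. I \<subseteq> {1..n} \<and> P (card I) (card I)} mod 2"
proof -
  let ?swap = "\<lambda>(I, J). (J, I)"
  have "card (equal_sum_pairs n P) mod 2 = card {x \<in> equal_sum_pairs n P. ?swap x = x} mod 2"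
    by (rule card_mod_2_eq_card_fixpoints_mod_2[OF finite_equal_sum_pairs])
      (use assms in \<open>auto simp: equal_sum_pairs_def\<close>)
  also have "{x \<in> equal_sum_pairs n P. ?swap x = x} =
      (\<lambda>I. (I, I)) ` {I. I \<subseteq> {1..n} \<and> P (card I) (card I)}"
    by (auto simp: equal_sum_pairs_def)
  also have "card \<dots> = card {I. I \<subseteq> {1..n} \<and> P (card I) (card I)}"
    by (rule card_image) (simp add: inj_on_def)
  finally show ?thesis .
qed

lemma equal_sum_pairs_1_1:
  "equal_sum_pairs n (\<lambda>a b. a = 1 \<and> b = 1) = (\<lambda>i. ({i}, {i})) ` {1..n}"
  by (auto simp: equal_sum_pairs_def card_Suc_eq)

lemma equal_sum_pairs_1_2:
  "equal_sum_pairs n (\<lambda>a b. a = 1 \<and> b = 2) =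
     (\<lambda>(a, b). ({a + b}, {a, b})) ` {(a, b). 1 \<le> a \<and> a < b \<and> a + b \<le> n}"
proof
  show "equal_sum_pairs n (\<lambda>a b. a = 1 \<and> b = 2) \<subseteq>
      (\<lambda>(a, b). ({a + b}, {a, b})) ` {(a, b). 1 \<le> a \<and> a < b \<and> a + b \<le> n}"
  proof
    fix x assume "x \<in> equal_sum_pairs n (\<lambda>a b. a = 1 \<and> b = 2)"
    then obtain I J where x: "x = (I, J)" and IJ: "I \<subseteq> {1..n}" "J \<subseteq> {1..n}"
      "card I = 1" "card J = 2" "\<Sum>I = \<Sum>J"
      unfolding equal_sum_pairs_def by auto
    obtain c where I: "I = {c}"
      using IJ(3) by (rule card_1_singletonE)
    obtain a b where J: "J = {a, b}" "a < b"
      using IJ(4) unfolding card_2_iff by (metis insert_commute linorder_neqE_nat)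
    have "x = (\<lambda>(a, b). ({a + b}, {a, b})) (a, b)"
      using x I J IJ(5) by simp
    moreover have "(a, b) \<in> {(a, b). 1 \<le> a \<and> a < b \<and> a + b \<le> n}"
      using I J IJ by auto
    ultimately show "x \<in> (\<lambda>(a, b). ({a + b}, {a, b})) ` {(a, b). 1 \<le> a \<and> a < b \<and> a + b \<le> n}"
      by blast
  qed
qed (auto simp: equal_sum_pairs_def)

lemma sum_atLeastAtMost_diff_double:
  fixes n :: nat
  assumes "2 * h \<le> n"
  shows "(\<Sum>a = 1..h. n - 2 * a) = h * (n - h - 1)"
  using assms
proof (induction h)
  case (Suc h)
  then obtain m where "n = 2 * Suc h + m"
    using le_Suc_ex by blast
  with Suc show ?case by (simp add: algebra_simps)
qed simp

lemma card_increasing_pairs_sum_le: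
  "card {(a, b). 1 \<le> a \<and> a < b \<and> a + b \<le> n} = n div 2 * (n - n div 2 - 1)"
proof -
  have "{(a, b). 1 \<le> a \<and> a < b \<and> a + b \<le> n} = Sigma {1..n div 2} (\<lambda>a. {a<..n - a})"
    by auto
  then have "card {(a, b). 1 \<le> a \<and> a < b \<and> a + b \<le> n} = (\<Sum>a = 1..n div 2. n - 2 * a)"
    by (simp add: card_SigmaI mult_2)
  then show ?thesis
    using sum_atLeastAtMost_diff_double[of "n div 2" n] by simp
qed

lemma dpq_1_1: "dpq n 1 1 = n"
  unfolding dpq_eq_card_equal_sum_pairs equal_sum_pairs_1_1
  by (simp add: card_image inj_on_def)

lemma dpq_1_2: "dpq n 1 2 = n div 2 * (n - n div 2 - 1)"
proof -
  have "inj_on (\<lambda>(a, b). ({a + b}, {a, b})) {(a, b). 1 \<le> a \<and> a < b \<and> a + b \<le> n}"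
    by (auto simp: inj_on_def doubleton_eq_iff)
  then show ?thesis
    unfolding dpq_eq_card_equal_sum_pairs equal_sum_pairs_1_2
    using card_increasing_pairs_sum_le by (simp add: card_image)
qed

lemma dpq_1_2_even:
  assumes "even n"
  shows "real (dpq n 1 2) = real n * (real n - 2) / 4"
proof -
  obtain h where n: "n = 2 * h"
    using assms by blast
  then have "dpq n 1 2 = h * (h - 1)"
    using dpq_1_2[of n] by simp
  with n show ?thesis
    by (cases h) (simp_all add: algebra_simps)
qed

lemma dpq_1_2_odd:
  assumes "odd n"
  shows "real (dpq n 1 2) = ((real n - 1) / 2) ^ 2"
proof -
  obtain h where n: "n = 2 * h + 1"
    using assms oddE by blast
  then have "dpq n 1 2 = h * h"
    using dpq_1_2[of n] by simp
  with n show ?thesis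
    by (simp add: power2_eq_square)
qed

lemma dpq_compl:
  assumes "p \<le> n" "q \<le> n"
  shows "dpq n (n - p) (n - q) = dpq n p q"
proof -
  have "equal_sum_pairs n (\<lambda>a b. a = n - p \<and> b = n - q) =
      equal_sum_pairs n (\<lambda>a b. n - a = p \<and> n - b = q)"
    by (rule equal_sum_pairs_cong) (use assms in auto)
  then show ?thesis
    unfolding dpq_eq_card_equal_sum_pairs
    using card_equal_sum_pairs_compl[of n "\<lambda>a b. a = p \<and> b = q"] by simp
qed

lemma dpq_diag_cong: "[dpq n k k = n choose k] (mod 2)"
proof -
  have "dpq n k k mod 2 = card {I. I \<subseteq> {1..n} \<and> card I = k} mod 2"
    using card_equal_sum_pairs_mod_2[of "\<lambda>a b. a = k \<and> b = k" n]
    by (auto simp: dpq_eq_card_equal_sum_pairs)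
  then show ?thesis
    using n_subsets[of "{1..n}" k] by (simp add: cong_def)
qed

lemma Dk_compl:
  assumes "k \<le> 2 * n"
  shows "Dk n (2 * n - k) = Dk n k"
proof -
  have "equal_sum_pairs n (\<lambda>a b. a + b = 2 * n - k) =
      equal_sum_pairs n (\<lambda>a b. n - a + (n - b) = k)"
    by (rule equal_sum_pairs_cong) (use assms in auto)
  then show ?thesis
    unfolding Dk_eq_card_equal_sum_pairs
    using card_equal_sum_pairs_compl[of n "\<lambda>a b. a + b = k"] by simp
qed

lemma Dk_0: "Dk n 0 = 1"
proof -
  have "equal_sum_pairs n (\<lambda>a b. a + b = 0) = {({}, {})}"
    by (auto simp: equal_sum_pairs_def dest: finite_subset)
  then show ?thesis
    by (simp add: Dk_eq_card_equal_sum_pairs)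
qed

lemma Dk_1: "Dk n 1 = 0"
proof -
  have "False" if "(I, J) \<in> equal_sum_pairs n (\<lambda>a b. a + b = 1)" for I J
  proof -
    have "card I + card J = 1"
      using that by (simp add: equal_sum_pairs_def)
    then show False
      using card_eq_0_iff_card_eq_0_if_in_equal_sum_pairs[OF that] by presburger
  qed
  then have "equal_sum_pairs n (\<lambda>a b. a + b = 1) = {}"
    by auto
  then show ?thesis
    by (simp add: Dk_eq_card_equal_sum_pairs)
qed

lemma Dk_2: "Dk n 2 = n"
proof -
  have "(I, J) \<in> equal_sum_pairs n (\<lambda>a b. a + b = 2) \<longleftrightarrow>
      (I, J) \<in> equal_sum_pairs n (\<lambda>a b. a = 1 \<and> b = 1)" for I J
    using card_eq_0_iff_card_eq_0_if_in_equal_sum_pairs[of I J n "\<lambda>a b. a + b = 2"]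
    by (auto simp: equal_sum_pairs_def)
  then have "equal_sum_pairs n (\<lambda>a b. a + b = 2) = equal_sum_pairs n (\<lambda>a b. a = 1 \<and> b = 1)"
    by auto
  then show ?thesis
    using dpq_1_1 by (simp add: Dk_eq_card_equal_sum_pairs dpq_eq_card_equal_sum_pairs)
qed

lemma even_Dk_odd:
  assumes "odd k"
  shows "even (Dk n k)"
proof -
  have "card I + card I \<noteq> k" for I :: "nat set"
    using assms by presburger
  then show ?thesis
    using card_equal_sum_pairs_mod_2[of "\<lambda>a b. a + b = k" n]
    by (simp add: Dk_eq_card_equal_sum_pairs even_iff_mod_2_eq_zero add.commute)
qed

lemma Dk_double_cong: "[Dk n (2 * k) = n choose k] (mod 2)"
proof -
  have "card I + card I = 2 * k \<longleftrightarrow> card I = k" for I :: "nat set"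
    by linarith
  then have "Dk n (2 * k) mod 2 = card {I. I \<subseteq> {1..n} \<and> card I = k} mod 2"
    using card_equal_sum_pairs_mod_2[of "\<lambda>a b. a + b = 2 * k" n]
    by (simp add: Dk_eq_card_equal_sum_pairs add.commute)
  then show ?thesis
    using n_subsets[of "{1..n}" k] by (simp add: cong_def)
qed

theorem lemma4p13:
  fixes n :: nat
  assumes "n \<ge> 2"
  shows "(dpq n 1 1 = n \<and> dpq n (n - 1) (n - 1) = n
          \<and> (\<forall>k\<le>n. [dpq n k k = n choose k] (mod 2)))
       \<and> (even n \<longrightarrow> real (dpq n 1 2) = real n * (real n - 2) / 4)
       \<and> (odd n \<longrightarrow> real (dpq n 1 2) = ((real n - 1) / 2) ^ 2)
       \<and> ((\<forall>k\<le>n. Dk n k = Dk n (2 * n - k)) \<and> Dk n 0 = 1 \<and> Dk n 1 = 0 \<and> Dk n 2 = n)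
       \<and> (\<forall>k\<le>2 * n. odd k \<longrightarrow> even (Dk n k))
       \<and> (\<forall>k\<le>n. [Dk n (2 * k) = n choose k] (mod 2))"
proof -
  have "dpq n (n - 1) (n - 1) = n"
    using dpq_compl[of 1 n 1] dpq_1_1[of n] assms by simp
  moreover have "Dk n k = Dk n (2 * n - k)" if "k \<le> n" for k
    using Dk_compl[of k n] that by simp
  ultimately show ?thesis
    using dpq_1_1 dpq_diag_cong dpq_1_2_even dpq_1_2_odd Dk_0 Dk_1 Dk_2 even_Dk_odd Dk_double_cong
    by (intro conjI allI impI) simp_all
qed

end
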